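(* For $\rho \in [-1,1]$ define $C_\rho:[0,1]^2\to[0,1]$ by: if $u \in \{0,1\}$ or $v\in\{0,1\}$, $C_\rho(u,v)=uv$; and for $u,v\in(0,1)$, $$C_\rho(u,v) = \begin{cases} W(u,v) & \text{if } \rho \le \underline{\rho}_{uv},\\ M(u,v) & \text{if } \rho \ge \overline{\rho}_{uv},\\ uv + \rho\sqrt{u(1-u)v(1-v)} & \text{otherwise},\end{cases}$$ where $W(u,v)=\max(u+v-1,0)$, $M(u,v)=\min(u,v)$, $\underline{\rho}_{uv} = \frac{\max(u+v-1,0)-uv}{\sqrt{u(1-u)v(1-v)}}$ and $\overline{\rho}_{uv} = \frac{\min(u,v)-uv}{\sqrt{u(1-u)v(1-v)}}$. Then for every $\rho\in[-1,1]$, $C_\rho$ is a bivariate copula, i.e. (i) $C_\rho(0,v)=C_\rho(u,0)=0$, (ii) $C_\rho(u,1)=u$ and $C_\rho(1,v)=v$, and (iii) $C_\rho(u_2,v_2)-C_\rho(u_2,v_1)-C_\rho(u_1,v_2)+C_\rho(u_1,v_1)\ge 0$ for all $0\le u_1\le u_2\le 1$, $0\le v_1\le v_2\le1$. Moreover $C_{-1}=W$, $C_0(u,v)=uv$ and $C_1=M$ on $[0,1]^2$.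
   Context: $C_\rho$ is called the correlated \emph{and} operator: for events with probabilities $u,v$ and Pearson correlation $\rho$ it gives the probability of their conjunction, clamped to the Fréchet bounds $W$ and $M$. *)

theory Defs
  imports Complex_Main
begin

definition frechetW :: "real \<Rightarrow> real \<Rightarrow> real" where
  "frechetW u v = max (u + v - 1) 0"

definition frechetM :: "real \<Rightarrow> real \<Rightarrow> real" where
  "frechetM u v = min u v"

definition rho_lower :: "real \<Rightarrow> real \<Rightarrow> real" where
  "rho_lower u v = (max (u + v - 1) 0 - u * v) / sqrt (u * (1 - u) * v * (1 - v))"

definition rho_upper :: "real \<Rightarrow> real \<Rightarrow> real" where
  "rho_upper u v = (min u v - u * v) / sqrt (u * (1 - u) * v * (1 - v))"

definition corr_and :: "real \<Rightarrow> real \<Rightarrow> real \<Rightarrow> real" where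
  "corr_and \<rho> u v =
     (if u \<in> {0, 1} \<or> v \<in> {0, 1} then u * v
      else if \<rho> \<le> rho_lower u v then frechetW u v
      else if \<rho> \<ge> rho_upper u v then frechetM u v
      else u * v + \<rho> * sqrt (u * (1 - u) * v * (1 - v)))"

end

theory Submission
  imports Defs "HOL-Analysis.Analysis"
begin

text \<open>
  Write \<open>\<sigma>(x) = sqrt (x (1 - x))\<close> and \<open>P\<^sub>r(u,v) = uv + r \<sigma>(u) \<sigma>(v)\<close>.
  Inside the unit square \<open>rho_lower u v < 0\<close>, so for \<open>\<rho> \<ge> 0\<close> the operator is
  \<open>C\<^sub>\<rho> = min M P\<^sub>\<rho>\<close>, while for \<open>\<rho> \<le> 0\<close> it is the reflection \<open>C\<^sub>\<rho>(u,v) = u - C\<^sub>-\<^sub>\<rho>(u, 1 - v)\<close>.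
  So everything reduces to the rectangle inequality for \<open>min M P\<^sub>r\<close> with \<open>0 \<le> r \<le> 1\<close>.
  Away from at most four kinks, its \<open>u\<close>-derivative is \<open>0\<close> below the band \<open>P\<^sub>r < M\<close>, \<open>1\<close> above it,
  and \<open>v + r \<sigma>'(u) \<sigma>(v)\<close> inside it; this lies in \<open>[0,1]\<close> and has \<open>v\<close>-derivative
  \<open>1 + r \<sigma>'(u) \<sigma>'(v) \<ge> 0\<close>. After squaring, \<open>P\<^sub>r < u\<close> and \<open>P\<^sub>r < v\<close> are linear in \<open>v\<close>, so the band
  is an interval in \<open>v\<close> and the derivative is nondecreasing in \<open>v\<close>; integrating it over
  \<open>[u\<^sub>1, u\<^sub>2]\<close> gives the inequality. Finally \<open>P\<^sub>1 \<ge> M\<close>, whence \<open>C\<^sub>1 = M\<close> and \<open>C\<^sub>-\<^sub>1 = W\<close>.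
\<close>

lemma DERIV_min_left:
  fixes f g :: "real \<Rightarrow> real"
  assumes "(f has_real_derivative D) (at x)" "isCont g x" "f x < g x"
  shows "((\<lambda>y. min (f y) (g y)) has_real_derivative D) (at x)"
proof -
  have "isCont (\<lambda>y. g y - f y) x"
    using assms(1,2) DERIV_isCont by (intro continuous_intros)
  then have lim: "((\<lambda>y. g y - f y) \<longlongrightarrow> g x - f x) (nhds x)"
    using tendsto_at_iff_tendsto_nhds[of "\<lambda>y. g y - f y" x] by (simp add: isCont_def)
  have "\<forall>\<^sub>F y in nhds x. 0 < g y - f y"
    using order_tendstoD(1)[OF lim, of 0] assms(3) by simp
  then have "\<forall>\<^sub>F y in nhds x. min (f y) (g y) = f y"
    by (rule eventually_mono) simp
  then show ?thesis
    using DERIV_cong_ev[OF refl _ refl] assms(1) by metis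
qed

lemma sqrt_mult_less_iff: "0 < b \<Longrightarrow> sqrt (c * b) < b \<longleftrightarrow> c < b"
  for b c :: real
  using real_sqrt_less_iff[of "c * b" "b * b"] by simp

lemma sqrt_mult_eq_iff: "0 < b \<Longrightarrow> sqrt (c * b) = b \<longleftrightarrow> c = b"
  for b c :: real
  using real_sqrt_eq_iff[of "c * b" "b * b"] by simp

lemma prod_le_min:
  fixes u v :: real
  assumes "0 \<le> u" "u \<le> 1" "0 \<le> v" "v \<le> 1"
  shows "u * v \<le> min u v"
  using mult_right_le_one_le[of u v] mult_left_le_one_le[of v u] assms by simp

definition bernoulli_sd :: "real \<Rightarrow> real" where
  "bernoulli_sd x = sqrt (x * (1 - x))"

definition bernoulli_sd_deriv :: "real \<Rightarrow> real" where
  "bernoulli_sd_deriv x = bernoulli_sd x / 2 * (1 / x - 1 / (1 - x))"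

lemma bernoulli_sd_0_1 [simp]: "bernoulli_sd 0 = 0" "bernoulli_sd 1 = 0"
  by (simp_all add: bernoulli_sd_def)

lemma bernoulli_sd_pos: "0 < x \<Longrightarrow> x < 1 \<Longrightarrow> 0 < bernoulli_sd x"
  by (simp add: bernoulli_sd_def)

lemma bernoulli_sd_nonneg: "0 \<le> x \<Longrightarrow> x \<le> 1 \<Longrightarrow> 0 \<le> bernoulli_sd x"
  by (simp add: bernoulli_sd_def)

lemma bernoulli_sd_square: "0 \<le> x \<Longrightarrow> x \<le> 1 \<Longrightarrow> (bernoulli_sd x)\<^sup>2 = x * (1 - x)"
  by (simp add: bernoulli_sd_def)

lemma bernoulli_sd_reflect: "bernoulli_sd (1 - x) = bernoulli_sd x"
  by (simp add: bernoulli_sd_def mult.commute)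

lemma isCont_bernoulli_sd [continuous_intros]:
  "isCont f x \<Longrightarrow> isCont (\<lambda>y. bernoulli_sd (f y)) x"
  unfolding bernoulli_sd_def by (intro continuous_intros)

lemma continuous_on_bernoulli_sd [continuous_intros]:
  "continuous_on A f \<Longrightarrow> continuous_on A (\<lambda>y. bernoulli_sd (f y))"
  unfolding bernoulli_sd_def by (intro continuous_intros)

lemma has_real_derivative_bernoulli_sd:
  assumes "0 < x" "x < 1"
  shows "(bernoulli_sd has_real_derivative bernoulli_sd_deriv x) (at x)"
proof -
  have pos: "0 < x * (1 - x)" using assms by simp
  have "((\<lambda>x. sqrt (x * (1 - x))) has_real_derivative
          inverse (sqrt (x * (1 - x))) / 2 * (1 - 2 * x)) (at x)"
    by (rule DERIV_chain2[where f = sqrt and g = "\<lambda>x. x * (1 - x)", OF DERIV_real_sqrt[OF pos]])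
      (auto intro!: derivative_eq_intros)
  moreover have "inverse (sqrt (x * (1 - x))) / 2 * (1 - 2 * x) = bernoulli_sd_deriv x"
    using assms bernoulli_sd_pos[OF assms] bernoulli_sd_square[of x]
    unfolding bernoulli_sd_deriv_def by (simp add: bernoulli_sd_def field_simps)
  ultimately show ?thesis
    unfolding bernoulli_sd_def[abs_def] by simp
qed

lemma sqrt_var_prod_eq: "sqrt (u * (1 - u) * v * (1 - v)) = bernoulli_sd u * bernoulli_sd v"
  by (simp add: bernoulli_sd_def real_sqrt_mult mult.assoc [symmetric])

definition corr_joint :: "real \<Rightarrow> real \<Rightarrow> real \<Rightarrow> real" where
  "corr_joint r u v = u * v + r * bernoulli_sd u * bernoulli_sd v"

lemma corr_joint_commute: "corr_joint r u v = corr_joint r v u"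
  by (simp add: corr_joint_def algebra_simps)

lemma corr_joint_diag_le:
  assumes "r \<le> 1" "0 \<le> u" "u \<le> 1"
  shows "corr_joint r u u \<le> u"
proof -
  have "corr_joint r u u = u * u + r * (u * (1 - u))"
    using bernoulli_sd_square[of u] assms by (simp add: corr_joint_def power2_eq_square mult.assoc)
  moreover have "r * (u * (1 - u)) \<le> u * (1 - u)"
    using assms mult_right_mono[of r 1 "u * (1 - u)"] by simp
  ultimately show ?thesis
    by (simp add: algebra_simps)
qed

lemma has_real_derivative_corr_joint:
  "0 < u \<Longrightarrow> u < 1 \<Longrightarrow>
   ((\<lambda>x. corr_joint r x v) has_real_derivative v + r * bernoulli_sd_deriv u * bernoulli_sd v) (at u)"
  unfolding corr_joint_def
  by (auto intro!: derivative_eq_intros has_real_derivative_bernoulli_sd)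

lemma isCont_corr_joint: "isCont (\<lambda>x. corr_joint r x v) u"
  unfolding corr_joint_def by (intro continuous_intros)

lemma cov_term_as_sqrt:
  assumes "0 \<le> r"
  shows "r * bernoulli_sd u * bernoulli_sd v = sqrt (r\<^sup>2 * (1 - u) * v * (u * (1 - v)))"
proof -
  have "r\<^sup>2 * (1 - u) * v * (u * (1 - v)) = r\<^sup>2 * (u * (1 - u)) * (v * (1 - v))"
    by (simp add: algebra_simps)
  then show ?thesis
    using assms by (simp add: bernoulli_sd_def real_sqrt_mult)
qed

lemma corr_joint_less_left_iff:
  assumes "0 \<le> r" "0 < u" "v < 1"
  shows "corr_joint r u v < u \<longleftrightarrow> r\<^sup>2 * (1 - u) * v < u * (1 - v)"
proof -
  have "corr_joint r u v < u \<longleftrightarrow> r * bernoulli_sd u * bernoulli_sd v < u * (1 - v)"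
    by (auto simp: corr_joint_def algebra_simps)
  then show ?thesis
    using assms by (simp add: cov_term_as_sqrt sqrt_mult_less_iff)
qed

lemma corr_joint_less_right_iff:
  assumes "0 \<le> r" "u < 1" "0 < v"
  shows "corr_joint r u v < v \<longleftrightarrow> r\<^sup>2 * (1 - v) * u < v * (1 - u)"
  using corr_joint_less_left_iff[of r v u] assms by (simp add: corr_joint_commute)

lemma corr_joint_eq_left_iff:
  assumes "0 \<le> r" "0 < u" "v < 1"
  shows "corr_joint r u v = u \<longleftrightarrow> r\<^sup>2 * (1 - u) * v = u * (1 - v)"
proof -
  have "corr_joint r u v = u \<longleftrightarrow> r * bernoulli_sd u * bernoulli_sd v = u * (1 - v)"
    by (auto simp: corr_joint_def algebra_simps)
  then show ?thesis
    using assms by (simp add: cov_term_as_sqrt sqrt_mult_eq_iff)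
qed

lemma corr_joint_less_min_iff:
  assumes "0 \<le> r" "0 < u" "u < 1" "0 < v" "v < 1"
  shows "corr_joint r u v < min u v \<longleftrightarrow>
           r\<^sup>2 * (1 - u) * v < u * (1 - v) \<and> r\<^sup>2 * (1 - v) * u < v * (1 - u)"
  using corr_joint_less_left_iff[of r u v] corr_joint_less_right_iff[of r u v] assms by simp

lemma corr_joint_less_min_iff_cov:
  "corr_joint r u v < min u v \<longleftrightarrow>
     r * bernoulli_sd u * bernoulli_sd v < u * (1 - v) \<and>
     r * bernoulli_sd u * bernoulli_sd v < v * (1 - u)"
  by (auto simp: corr_joint_def algebra_simps)

lemma corr_joint_less_min_imp_interior:
  assumes "0 \<le> u" "u \<le> 1" "0 \<le> v" "v \<le> 1" "corr_joint r u v < min u v"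
  shows "0 < v \<and> v < 1"
proof -
  have "v \<noteq> 0" "v \<noteq> 1"
    using assms by (auto simp: corr_joint_def min_def split: if_splits)
  then show ?thesis
    using assms(3,4) by auto
qed

lemma corr_joint_less_left_antimono:
  assumes "0 \<le> r" "0 < u" "u \<le> 1" "0 \<le> v1" "v1 \<le> v2" "v2 < 1" "corr_joint r u v2 < u"
  shows "corr_joint r u v1 < u"
proof -
  have "r\<^sup>2 * (1 - u) * v2 < u * (1 - v2)"
    using corr_joint_less_left_iff assms by blast
  moreover have "r\<^sup>2 * (1 - u) * v1 \<le> r\<^sup>2 * (1 - u) * v2"
    using assms by (intro mult_left_mono) auto
  moreover have "u * (1 - v2) \<le> u * (1 - v1)"
    using assms by (intro mult_left_mono) auto
  ultimately have "r\<^sup>2 * (1 - u) * v1 < u * (1 - v1)"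
    by linarith
  then show ?thesis
    using corr_joint_less_left_iff assms by auto
qed

lemma corr_joint_less_right_mono:
  assumes "0 \<le> r" "0 \<le> u" "u < 1" "0 < v1" "v1 \<le> v2" "corr_joint r u v1 < v1"
  shows "corr_joint r u v2 < v2"
proof -
  have "r\<^sup>2 * (1 - v1) * u < v1 * (1 - u)"
    using corr_joint_less_right_iff assms by blast
  moreover have "r\<^sup>2 * (1 - v2) * u \<le> r\<^sup>2 * (1 - v1) * u"
    using assms by (intro mult_right_mono mult_left_mono) auto
  moreover have "v1 * (1 - u) \<le> v2 * (1 - u)"
    using assms by (intro mult_right_mono) auto
  ultimately have "r\<^sup>2 * (1 - v2) * u < v2 * (1 - u)"
    by linarith
  then show ?thesis
    using corr_joint_less_right_iff assms by auto
qed

text \<open>The solutions \<open>u\<close> of \<open>corr_joint r u v = u\<close> and of \<open>corr_joint r u v = v\<close>: the kinks of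
  \<open>corr_and_nonneg r \<cdot> v\<close>.\<close>

definition joint_meets_u :: "real \<Rightarrow> real \<Rightarrow> real" where
  "joint_meets_u r v = r\<^sup>2 * v / (r\<^sup>2 * v + 1 - v)"

definition joint_meets_v :: "real \<Rightarrow> real \<Rightarrow> real" where
  "joint_meets_v r v = v / (r\<^sup>2 * (1 - v) + v)"

lemma corr_joint_eq_u_imp:
  assumes "0 \<le> r" "0 < u" "0 \<le> v" "v < 1" "corr_joint r u v = u"
  shows "u = joint_meets_u r v"
proof -
  have "0 \<le> r\<^sup>2 * v"
    using assms(3) by simp
  then have "0 < r\<^sup>2 * v + 1 - v"
    using assms(4) by linarith
  moreover have "r\<^sup>2 * (1 - u) * v = u * (1 - v)"
    using corr_joint_eq_left_iff assms by blast
  ultimately show ?thesis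
    unfolding joint_meets_u_def by (simp add: field_simps)
qed

lemma corr_joint_eq_v_imp:
  assumes "0 \<le> r" "u < 1" "0 < v" "v \<le> 1" "corr_joint r u v = v"
  shows "u = joint_meets_v r v"
proof -
  have "0 \<le> r\<^sup>2 * (1 - v)"
    using assms(4) by simp
  then have "0 < r\<^sup>2 * (1 - v) + v"
    using assms(3) by linarith
  moreover have "r\<^sup>2 * (1 - v) * u = v * (1 - u)"
    using corr_joint_eq_left_iff[of r v u] assms by (simp add: corr_joint_commute)
  ultimately show ?thesis
    unfolding joint_meets_v_def by (simp add: field_simps)
qed

text \<open>In the next two lemmas \<open>p\<close> stands for \<open>r * bernoulli_sd u * bernoulli_sd v\<close>, and the bounds on
  \<open>p\<close> say that \<open>(u,v)\<close> lies in the band \<open>corr_joint r u v < min u v\<close>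
  (see \<open>slope_as_cov\<close> and \<open>slope_deriv_as_cov\<close>).\<close>

lemma band_slope_bounds:
  fixes p u v :: real
  assumes "0 < u" "u < 1" "0 \<le> p" "p < u * (1 - v)" "p < v * (1 - u)"
  shows "0 \<le> v + p / 2 * (1 / u - 1 / (1 - u))" "v + p / 2 * (1 / u - 1 / (1 - u)) \<le> 1"
proof -
  define a where "a = 1 / u"
  define b where "b = 1 / (1 - u)"
  have "p * a < 1 - v" "p * b < v" "0 \<le> p * a" "0 \<le> p * b"
    using assms by (simp_all add: a_def b_def divide_less_eq mult.commute)
  moreover have "p / 2 * (a - b) = p * a / 2 - p * b / 2"
    by (simp add: field_simps)
  ultimately have "0 \<le> v + p / 2 * (a - b)" "v + p / 2 * (a - b) \<le> 1"
    by linarith+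
  then show "0 \<le> v + p / 2 * (1 / u - 1 / (1 - u))" "v + p / 2 * (1 / u - 1 / (1 - u)) \<le> 1"
    by (simp_all add: a_def b_def)
qed

lemma band_slope_mono:
  fixes p u v :: real
  assumes "0 < u" "u < 1" "0 < v" "v < 1" "0 \<le> p" "p < u * (1 - v)" "p < v * (1 - u)"
  shows "0 \<le> 1 + p / 4 * (1 / u - 1 / (1 - u)) * (1 / v - 1 / (1 - v))"
proof -
  define a where "a = 1 / u"
  define b where "b = 1 / (1 - u)"
  define c where "c = 1 / v"
  define d where "d = 1 / (1 - v)"
  have "p * a * d < 1" "p * b * c < 1" "0 \<le> p * a * c" "0 \<le> p * b * d"
    using assms by (simp_all add: a_def b_def c_def d_def divide_less_eq mult.commute)
  moreover have "p / 4 * (a - b) * (c - d) =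
      p * a * c / 4 + p * b * d / 4 - p * a * d / 4 - p * b * c / 4"
    by (simp add: field_simps)
  ultimately have "0 \<le> 1 + p / 4 * (a - b) * (c - d)"
    by linarith
  then show ?thesis
    by (simp add: a_def b_def c_def d_def)
qed

definition corr_and_nonneg :: "real \<Rightarrow> real \<Rightarrow> real \<Rightarrow> real" where
  "corr_and_nonneg r u v = min (min u v) (corr_joint r u v)"

definition corr_and_nonneg_du :: "real \<Rightarrow> real \<Rightarrow> real \<Rightarrow> real" where
  "corr_and_nonneg_du r u v =
     (if corr_joint r u v < min u v then v + r * bernoulli_sd_deriv u * bernoulli_sd v
      else if u < v then 1 else 0)"

lemma slope_as_cov:
  "r * bernoulli_sd_deriv u * bernoulli_sd v =
     r * bernoulli_sd u * bernoulli_sd v / 2 * (1 / u - 1 / (1 - u))"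
  by (simp add: bernoulli_sd_deriv_def)

lemma slope_deriv_as_cov:
  "r * bernoulli_sd_deriv u * bernoulli_sd_deriv v =
     r * bernoulli_sd u * bernoulli_sd v / 4 * (1 / u - 1 / (1 - u)) * (1 / v - 1 / (1 - v))"
  by (simp add: bernoulli_sd_deriv_def)

lemma has_real_derivative_corr_and_nonneg_interior:
  assumes r: "0 \<le> r" "r \<le> 1" and u: "0 < u" "u < 1" and v: "0 < v" "v < 1"
    and "u \<noteq> joint_meets_u r v" "u \<noteq> joint_meets_v r v"
  shows "((\<lambda>x. corr_and_nonneg r x v) has_real_derivative corr_and_nonneg_du r u v) (at u)"
proof -
  let ?P = "\<lambda>x. corr_joint r x v"
  have "?P u \<noteq> u"
    using corr_joint_eq_u_imp assms by auto
  moreover have "?P u \<noteq> v"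
    using corr_joint_eq_v_imp assms by auto
  moreover have "?P u \<le> u" if "u = v"
    using corr_joint_diag_le that r u by auto
  ultimately consider "?P u < min u v" | "u < v" "u < ?P u" | "v < u" "v < ?P u"
    by (cases u v rule: linorder_cases) (auto simp: min_def neq_iff)
  then show ?thesis
  proof cases
    case 1
    have "corr_and_nonneg r x v = min (?P x) (min x v)" for x
      by (simp add: corr_and_nonneg_def min.commute)
    moreover have "(?P has_real_derivative corr_and_nonneg_du r u v) (at u)"
      using has_real_derivative_corr_joint[OF u] 1 by (simp add: corr_and_nonneg_du_def)
    ultimately show ?thesis
      using DERIV_min_left[where g = "\<lambda>x. min x v"] 1 by (simp add: continuous_intros)
  next
    case 2
    have "corr_and_nonneg r x v = min x (min v (?P x))" for x
      by (simp add: corr_and_nonneg_def min.assoc)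
    moreover have "corr_and_nonneg_du r u v = 1"
      using 2 by (simp add: corr_and_nonneg_du_def)
    ultimately show ?thesis
      using DERIV_min_left[of "\<lambda>x. x" 1 u "\<lambda>x. min v (?P x)"] 2
      by (simp add: continuous_intros isCont_corr_joint)
  next
    case 3
    have "corr_and_nonneg r x v = min v (min x (?P x))" for x
      by (simp add: corr_and_nonneg_def min.left_commute min.assoc)
    moreover have "corr_and_nonneg_du r u v = 0"
      using 3 by (simp add: corr_and_nonneg_du_def)
    ultimately show ?thesis
      using DERIV_min_left[of "\<lambda>x. v" 0 u "\<lambda>x. min x (?P x)"] 3
      by (simp add: continuous_intros isCont_corr_joint)
  qed
qed

lemma has_real_derivative_corr_and_nonneg:
  assumes r: "0 \<le> r" "r \<le> 1" and v: "0 \<le> v" "v \<le> 1" and u: "0 < u" "u < 1"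
    and "u \<noteq> joint_meets_u r v" "u \<noteq> joint_meets_v r v"
  shows "((\<lambda>x. corr_and_nonneg r x v) has_real_derivative corr_and_nonneg_du r u v) (at u)"
proof -
  consider "v = 0" | "v = 1" | "0 < v" "v < 1"
    using v by linarith
  then show ?thesis
  proof cases
    case 1
    have "corr_and_nonneg r x v = min 0 x" for x
      using 1 by (simp add: corr_and_nonneg_def corr_joint_def min_def)
    moreover have "((\<lambda>x. min 0 x) has_real_derivative 0) (at u)"
      by (rule DERIV_min_left) (use u in auto)
    ultimately show ?thesis
      using 1 u by (simp add: corr_and_nonneg_du_def corr_joint_def)
  next
    case 2
    have "corr_and_nonneg r x v = min x 1" for x
      using 2 by (simp add: corr_and_nonneg_def corr_joint_def min_def)
    moreover have "((\<lambda>x. min x 1) has_real_derivative 1) (at u)"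
      by (rule DERIV_min_left) (use u in auto)
    ultimately show ?thesis
      using 2 u by (simp add: corr_and_nonneg_du_def corr_joint_def)
  next
    case 3
    then show ?thesis
      using has_real_derivative_corr_and_nonneg_interior assms by blast
  qed
qed

lemma corr_and_nonneg_du_bounds:
  assumes "0 \<le> r" "0 < u" "u < 1" "0 \<le> v" "v \<le> 1"
  shows "0 \<le> corr_and_nonneg_du r u v \<and> corr_and_nonneg_du r u v \<le> 1"
proof (cases "corr_joint r u v < min u v")
  case True
  let ?p = "r * bernoulli_sd u * bernoulli_sd v"
  have "0 \<le> ?p"
    using assms by (simp add: bernoulli_sd_nonneg)
  moreover have "?p < u * (1 - v)" "?p < v * (1 - u)"
    using True corr_joint_less_min_iff_cov by blast+
  ultimately show ?thesis
    using band_slope_bounds[OF assms(2,3), of ?p v] True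
    unfolding corr_and_nonneg_du_def slope_as_cov by simp
next
  case False
  then show ?thesis
    unfolding corr_and_nonneg_du_def if_not_P[OF False] by simp
qed

lemma band_slope_increasing:
  assumes r: "0 \<le> r" and u: "0 < u" "u < 1" and v: "0 < v1" "v1 \<le> v2" "v2 < 1"
    and band1: "corr_joint r u v1 < min u v1" and band2: "corr_joint r u v2 < min u v2"
  shows "v1 + r * bernoulli_sd_deriv u * bernoulli_sd v1
           \<le> v2 + r * bernoulli_sd_deriv u * bernoulli_sd v2"
proof (rule DERIV_nonneg_imp_increasing_open[OF v(2)])
  fix x assume x: "v1 < x" "x < v2"
  let ?p = "r * bernoulli_sd u * bernoulli_sd x"
  have "corr_joint r u x < u"
    using corr_joint_less_left_antimono[of r u x v2] band2 r u v x by auto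
  moreover have "corr_joint r u x < x"
    using corr_joint_less_right_mono[of r u v1 x] band1 r u v x by auto
  ultimately have "?p < u * (1 - x)" "?p < x * (1 - u)"
    using corr_joint_less_min_iff_cov by auto
  moreover have "0 \<le> ?p"
    using r u v x by (simp add: bernoulli_sd_nonneg)
  ultimately have "0 \<le> 1 + r * bernoulli_sd_deriv u * bernoulli_sd_deriv x"
    unfolding slope_deriv_as_cov using band_slope_mono[of u x ?p] u v x by simp
  moreover have "((\<lambda>x. x + r * bernoulli_sd_deriv u * bernoulli_sd x) has_real_derivative
                   1 + r * bernoulli_sd_deriv u * bernoulli_sd_deriv x) (at x)"
    using has_real_derivative_bernoulli_sd[of x] v x by (auto intro!: derivative_eq_intros)
  ultimately show "\<exists>y. ((\<lambda>x. x + r * bernoulli_sd_deriv u * bernoulli_sd x)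
                        has_real_derivative y) (at x) \<and> 0 \<le> y"
    by blast
qed (intro continuous_intros)

lemma corr_and_nonneg_du_cases:
  assumes r: "0 \<le> r" and u: "0 < u" "u < 1" and v: "0 \<le> v1" "v1 \<le> v2" "v2 \<le> 1"
  obtains "corr_and_nonneg_du r u v1 = 0" | "corr_and_nonneg_du r u v2 = 1"
    | "corr_joint r u v1 < min u v1" "corr_joint r u v2 < min u v2"
proof (cases "corr_joint r u v1 < min u v1")
  case band1: True
  show ?thesis
  proof (cases "corr_joint r u v2 < min u v2")
    case True
    then show ?thesis
      using that(3) band1 by blast
  next
    case nonband2: False
    have "corr_joint r u v2 < v2"
      using corr_joint_less_right_mono[of r u v1 v2] corr_joint_less_min_imp_interior[of u v1 r]
        band1 r u v
      by auto
    then have "u < v2"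
      using nonband2 by (simp add: min_def split: if_splits)
    then show ?thesis
      using that(2) unfolding corr_and_nonneg_du_def if_not_P[OF nonband2] by simp
  qed
next
  case nonband1: False
  show ?thesis
  proof (cases "u < v1")
    case True
    have "\<not> corr_joint r u v2 < min u v2"
    proof
      assume band2: "corr_joint r u v2 < min u v2"
      then have "corr_joint r u v1 < u"
        using corr_joint_less_left_antimono[of r u v1 v2] corr_joint_less_min_imp_interior[of u v2 r]
          r u v
        by auto
      then show False
        using nonband1 True by (simp add: min_def)
    qed
    then show ?thesis
      using that(2) True v unfolding corr_and_nonneg_du_def by simp
  next
    case False
    then show ?thesis
      using that(1) unfolding corr_and_nonneg_du_def if_not_P[OF nonband1] by simp
  qed
qed

lemma corr_and_nonneg_du_mono:
  assumes r: "0 \<le> r" and u: "0 < u" "u < 1" and v: "0 \<le> v1" "v1 \<le> v2" "v2 \<le> 1"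
  shows "corr_and_nonneg_du r u v1 \<le> corr_and_nonneg_du r u v2"
  using assms
proof (cases rule: corr_and_nonneg_du_cases)
  case 3
  then show ?thesis
    using band_slope_increasing[OF r u _ v(2)]
      corr_joint_less_min_imp_interior[of u v1 r] corr_joint_less_min_imp_interior[of u v2 r] u v
    by (simp add: corr_and_nonneg_du_def)
qed (use corr_and_nonneg_du_bounds[OF r u] v in auto)

lemma continuous_on_corr_and_nonneg: "continuous_on A (\<lambda>x. corr_and_nonneg r x v)"
  unfolding corr_and_nonneg_def corr_joint_def by (intro continuous_intros)

lemma corr_and_nonneg_2_increasing:
  assumes r: "0 \<le> r" "r \<le> 1" and u: "0 \<le> u1" "u1 \<le> u2" "u2 \<le> 1"
    and v: "0 \<le> v1" "v1 \<le> v2" "v2 \<le> 1"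
  shows "corr_and_nonneg r u2 v2 - corr_and_nonneg r u2 v1
           - corr_and_nonneg r u1 v2 + corr_and_nonneg r u1 v1 \<ge> 0"
proof -
  define f where "f x = corr_and_nonneg r x v2 - corr_and_nonneg r x v1" for x
  define f' where "f' x = corr_and_nonneg_du r x v2 - corr_and_nonneg_du r x v1" for x
  define kinks where
    "kinks = {joint_meets_u r v1, joint_meets_v r v1, joint_meets_u r v2, joint_meets_v r v2}"
  have "(f' has_integral (f u2 - f u1)) {u1..u2}"
  proof (rule fundamental_theorem_of_calculus_interior_strong[of kinks])
    show "continuous_on {u1..u2} f"
      unfolding f_def by (intro continuous_intros continuous_on_corr_and_nonneg)
    fix x assume x: "x \<in> {u1<..<u2} - kinks"
    then have "0 < x" "x < 1"
      using u by auto
    then have "((\<lambda>x. corr_and_nonneg r x v2) has_real_derivative corr_and_nonneg_du r x v2) (at x)"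
              "((\<lambda>x. corr_and_nonneg r x v1) has_real_derivative corr_and_nonneg_du r x v1) (at x)"
      using has_real_derivative_corr_and_nonneg r v x by (auto simp: kinks_def)
    then show "(f has_vector_derivative f' x) (at x)"
      unfolding f_def f'_def has_real_derivative_iff_has_vector_derivative [symmetric]
      by (rule DERIV_diff)
  qed (use u in \<open>simp_all add: kinks_def\<close>)
  moreover have "0 \<le> f' x" if "x \<in> {u1..u2}" for x
  proof (cases "x = 0 \<or> x = 1")
    case True
    then show ?thesis
      using v by (auto simp: f'_def corr_and_nonneg_du_def corr_joint_def)
  next
    case False
    then show ?thesis
      using corr_and_nonneg_du_mono[of r x v1 v2] r u v that by (simp add: f'_def)
  qed
  ultimately have "0 \<le> f u2 - f u1"
    by (rule has_integral_nonneg)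
  then show ?thesis
    unfolding f_def by simp
qed

lemma corr_and_nonneg_one:
  assumes u: "0 \<le> u" "u \<le> 1" and v: "0 \<le> v" "v \<le> 1"
  shows "corr_and_nonneg 1 u v = min u v"
proof -
  have "\<not> corr_joint 1 u v < min u v"
  proof
    assume band: "corr_joint 1 u v < min u v"
    then have "0 < u \<and> u < 1" "0 < v \<and> v < 1"
      using corr_joint_less_min_imp_interior[of v u 1] corr_joint_less_min_imp_interior[OF u v, of 1] u v
      by (simp_all add: corr_joint_commute min.commute)
    then have "(1 - u) * v < u * (1 - v)" "(1 - v) * u < v * (1 - u)"
      using band corr_joint_less_min_iff[of 1 u v] by simp_all
    then show False
      by (simp add: algebra_simps)
  qed
  then show ?thesis
    unfolding corr_and_nonneg_def by (meson min_absorb1 not_less)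
qed

lemma corr_and_eq_nonneg:
  assumes r: "0 \<le> r" and u: "0 \<le> u" "u \<le> 1" and v: "0 \<le> v" "v \<le> 1"
  shows "corr_and r u v = corr_and_nonneg r u v"
proof (cases "u \<in> {0, 1} \<or> v \<in> {0, 1}")
  case True
  then have "corr_joint r u v = u * v"
    by (auto simp: corr_joint_def)
  then show ?thesis
    using True prod_le_min[OF u v] by (simp add: corr_and_def corr_and_nonneg_def)
next
  case False
  then have u': "0 < u" "u < 1" and v': "0 < v" "v < 1"
    using u v by auto
  define s where "s = bernoulli_sd u * bernoulli_sd v"
  have s: "0 < s" "sqrt (u * (1 - u) * v * (1 - v)) = s"
    using bernoulli_sd_pos u' v' by (simp_all add: s_def sqrt_var_prod_eq)
  have "max (u + v - 1) 0 < u * v"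
    using mult_pos_pos[of "1 - u" "1 - v"] u' v' by (simp add: algebra_simps)
  then have "rho_lower u v < 0"
    using s unfolding rho_lower_def by (simp add: divide_neg_pos)
  then have "corr_and r u v = (if rho_upper u v \<le> r then min u v else u * v + r * s)"
    using False r s(2) by (simp add: corr_and_def frechetM_def)
  moreover have "rho_upper u v \<le> r \<longleftrightarrow> min u v \<le> u * v + r * s"
    using s unfolding rho_upper_def by (simp add: divide_le_eq algebra_simps)
  moreover have "corr_joint r u v = u * v + r * s"
    by (simp add: corr_joint_def s_def)
  ultimately show ?thesis
    by (simp add: corr_and_nonneg_def min_def)
qed

lemma corr_and_eq_reflect:
  assumes r: "r \<le> 0" and u: "0 \<le> u" "u \<le> 1" and v: "0 \<le> v" "v \<le> 1"
  shows "corr_and r u v = u - corr_and_nonneg (- r) u (1 - v)"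
proof (cases "u \<in> {0, 1} \<or> v \<in> {0, 1}")
  case True
  then have "corr_joint (- r) u (1 - v) = u * (1 - v)"
    by (auto simp: corr_joint_def bernoulli_sd_reflect)
  then have "corr_and_nonneg (- r) u (1 - v) = u * (1 - v)"
    using prod_le_min[of u "1 - v"] u v by (simp add: corr_and_nonneg_def)
  then show ?thesis
    using True by (auto simp: corr_and_def algebra_simps)
next
  case False
  then have u': "0 < u" "u < 1" and v': "0 < v" "v < 1"
    using u v by auto
  define s where "s = bernoulli_sd u * bernoulli_sd v"
  have s: "0 < s" "sqrt (u * (1 - u) * v * (1 - v)) = s"
    using bernoulli_sd_pos u' v' by (simp_all add: s_def sqrt_var_prod_eq)
  have "u * v < min u v"
    using u' v' by simp
  then have "0 < rho_upper u v"
    using s unfolding rho_upper_def by simp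
  moreover have "r \<le> rho_lower u v \<longleftrightarrow> u * v + r * s \<le> max (u + v - 1) 0"
    using s unfolding rho_lower_def by (simp add: le_divide_eq algebra_simps)
  moreover have "corr_joint (- r) u (1 - v) = u - (u * v + r * s)"
    by (simp add: corr_joint_def s_def bernoulli_sd_reflect algebra_simps)
  ultimately show ?thesis
    using False r s(2)
    by (auto simp: corr_and_def corr_and_nonneg_def frechetW_def min_def max_def)
qed

lemma corr_and_2_increasing:
  assumes r: "-1 \<le> r" "r \<le> 1" and u: "0 \<le> u1" "u1 \<le> u2" "u2 \<le> 1"
    and v: "0 \<le> v1" "v1 \<le> v2" "v2 \<le> 1"
  shows "corr_and r u2 v2 - corr_and r u2 v1 - corr_and r u1 v2 + corr_and r u1 v1 \<ge> 0"
proof (cases "0 \<le> r")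
  case True
  then show ?thesis
    using corr_and_nonneg_2_increasing[OF True r(2) u v] corr_and_eq_nonneg[OF True] u v by simp
next
  case False
  then show ?thesis
    using corr_and_nonneg_2_increasing[of "- r" u1 u2 "1 - v2" "1 - v1"] corr_and_eq_reflect[of r] r u v
    by simp
qed

theorem mainTheorem2:
  shows
   "(\<forall>\<rho> \<in> {-1..1::real}.
       (\<forall>v \<in> {0..1}. corr_and \<rho> 0 v = 0) \<and>
       (\<forall>u \<in> {0..1}. corr_and \<rho> u 0 = 0) \<and>
       (\<forall>u \<in> {0..1}. corr_and \<rho> u 1 = u) \<and>
       (\<forall>v \<in> {0..1}. corr_and \<rho> 1 v = v) \<and>
       (\<forall>u1 u2 v1 v2. 0 \<le> u1 \<longrightarrow> u1 \<le> u2 \<longrightarrow> u2 \<le> 1 \<longrightarrow>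
          0 \<le> v1 \<longrightarrow> v1 \<le> v2 \<longrightarrow> v2 \<le> 1 \<longrightarrow>
          corr_and \<rho> u2 v2 - corr_and \<rho> u2 v1 - corr_and \<rho> u1 v2 + corr_and \<rho> u1 v1 \<ge> 0))
    \<and> (\<forall>u \<in> {0..1}. \<forall>v \<in> {0..1}.
         corr_and (-1) u v = frechetW u v \<and>
         corr_and 0 u v = u * v \<and>
         corr_and 1 u v = frechetM u v)"
proof (intro conjI ballI allI impI)
  fix \<rho> u v :: real
  show "corr_and \<rho> 0 v = 0" "corr_and \<rho> u 0 = 0" "corr_and \<rho> u 1 = u" "corr_and \<rho> 1 v = v"
    by (simp_all add: corr_and_def)
next
  fix \<rho> u1 u2 v1 v2 :: real
  assume "\<rho> \<in> {-1..1}" "0 \<le> u1" "u1 \<le> u2" "u2 \<le> 1" "0 \<le> v1" "v1 \<le> v2" "v2 \<le> 1"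
  then show "corr_and \<rho> u2 v2 - corr_and \<rho> u2 v1 - corr_and \<rho> u1 v2 + corr_and \<rho> u1 v1 \<ge> 0"
    by (intro corr_and_2_increasing) auto
next
  fix u v :: real assume "u \<in> {0..1}" "v \<in> {0..1}"
  then have u: "0 \<le> u" "u \<le> 1" and v: "0 \<le> v" "v \<le> 1"
    by auto
  show "corr_and (-1) u v = frechetW u v"
    using corr_and_eq_reflect[of "-1" u v] corr_and_nonneg_one[of u "1 - v"] u v
    by (auto simp: frechetW_def min_def max_def)
  show "corr_and 0 u v = u * v"
    using corr_and_eq_nonneg[of 0 u v] prod_le_min[OF u v] u v
    by (simp add: corr_and_nonneg_def corr_joint_def)
  show "corr_and 1 u v = frechetM u v"
    using corr_and_eq_nonneg[of 1 u v] corr_and_nonneg_one[OF u v] u v by (simp add: frechetM_def)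
qed

end
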